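(* Let $\mathcal{A}=\{a_1,\ldots,a_m\}$ be a set of $m$ distinct positive integers, and let $\phi_{\mathcal{A},\mathbb{C}}:\mathbb{C}^n\to\mathbb{C}^m$, $x\mapsto(\sum_{i=1}^n x_i^{a_j})_{j=1,\ldots,m}$, with restrictions $\phi_{\mathcal{A},\mathbb{R}}:\mathbb{R}^n\to\mathbb{R}^m$ and $\phi_{\mathcal{A},\ge0}:\mathbb{R}^n_{\ge0}\to\mathbb{R}^m_{\ge0}$. Using the classical topology: (1) the constructible set $\mathrm{im}(\phi_{\mathcal{A},\mathbb{C}})$ is not closed in $\mathbb{C}^m$ in general (there exist $n,\mathcal{A}$ for which it is not closed); (2) if some $a_j$ is even, then the semialgebraic set $\mathrm{im}(\phi_{\mathcal{A},\mathbb{R}})$ is closed in $\mathbb{R}^m$; if all $a_j$ are odd, it is not closed in general (there exist such $n,\mathcal{A}$ for which it is not closed); (3) for every $n$ and $\mathcal{A}$, the semialgebraic set $\mathrm{im}(\phi_{\mathcal{A},\ge0})$ is closed in $\mathbb{R}^m_{\ge0}$. *)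

theory Defs
  imports "HOL-Analysis.Analysis"
begin

text \<open>A point of K^n is a function x :: nat => K of which only x 0..x (n-1)
  matter; a point of K^m is a function y :: nat => K vanishing outside {..<m}.
  Closedness is with respect to the product topology on nat => K, under which the
  subspace of functions vanishing outside {..<m} is closed and homeomorphic to K^m.\<close>

definition power_sum_map :: "nat \<Rightarrow> nat list \<Rightarrow> (nat \<Rightarrow> 'a::comm_ring_1) \<Rightarrow> (nat \<Rightarrow> 'a)" where
  "power_sum_map n a x = (\<lambda>j. if j < length a then (\<Sum>i<n. x i ^ (a ! j)) else 0)"

definition valid_exponents :: "nat list \<Rightarrow> bool" where
  "valid_exponents a \<longleftrightarrow> distinct a \<and> (\<forall>k\<in>set a. 0 < k)"

definition im_complex :: "nat \<Rightarrow> nat list \<Rightarrow> (nat \<Rightarrow> complex) set" where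
  "im_complex n a = power_sum_map n a ` (UNIV :: (nat \<Rightarrow> complex) set)"

definition im_real :: "nat \<Rightarrow> nat list \<Rightarrow> (nat \<Rightarrow> real) set" where
  "im_real n a = power_sum_map n a ` (UNIV :: (nat \<Rightarrow> real) set)"

definition im_nonneg :: "nat \<Rightarrow> nat list \<Rightarrow> (nat \<Rightarrow> real) set" where
  "im_nonneg n a = power_sum_map n a ` {x :: nat \<Rightarrow> real. \<forall>i<n. 0 \<le> x i}"

definition nonneg_orthant :: "nat \<Rightarrow> (nat \<Rightarrow> real) set" where
  "nonneg_orthant m = {y. (\<forall>j<m. 0 \<le> y j) \<and> (\<forall>j\<ge>m. y j = 0)}"

end

theory Submission
  imports Defs
begin

text \<open>Closedness: if some exponent e = a!j makes every summand x_i^e nonnegative on the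
  admissible coordinate set P, then |x_i| <= max 1 (y_j) for every preimage x of y, so the
  preimage of a set of points with bounded j-th coordinate lies in a compact box. A convergent
  sequence of image points therefore stays inside the compact, hence closed, image of one
  such box. Non-closedness for the exponents {1, 3} and n = 2: along the curve
  x = (1/v, v^2/3 - 1/v) the power sums are (v^2/3, v^6/27 - v^3/3 + 1), which tend to
  (0, 1) as v -> 0; but x_1 + x_2 = 0 forces x_1^3 + x_2^3 = 0.\<close>

lemma continuous_on_power_sum_map:
  "continuous_on S (power_sum_map n a :: (nat \<Rightarrow> 'a::{comm_ring_1,real_normed_algebra}) \<Rightarrow> _)"
  unfolding power_sum_map_def
proof (intro continuous_on_coordinatewise_then_product)
  fix j
  show "continuous_on S (\<lambda>x. if j < length a then \<Sum>i<n. x i ^ (a!j) else 0)"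
    by (cases "j < length a")
      (auto intro!: continuous_intros continuous_on_subset[OF continuous_on_product_coordinates])
qed

lemma power_sum_map_restrict:
  "power_sum_map n a (\<lambda>i. if i < n then x i else 0) = power_sum_map n a x"
  unfolding power_sum_map_def by auto

lemma power_sum_map_Nil: "power_sum_map n [] x = (\<lambda>_. 0)"
  by (simp add: power_sum_map_def)

lemma compact_Pi_UNIV:
  fixes K :: "'i \<Rightarrow> 'a::topological_space set"
  assumes "\<And>i. compact (K i)"
  shows "compact (Pi UNIV K)"
proof -
  have "compactin (product_topology (\<lambda>i. euclidean) UNIV) (PiE UNIV K)"
    unfolding compactin_PiE using assms by auto
  then show ?thesis
    by (simp add: PiE_UNIV_domain euclidean_product_topology)
qed

lemma abs_le_max_one_power:
  fixes u :: real
  assumes "0 < e"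
  shows "\<bar>u\<bar> \<le> max 1 (\<bar>u\<bar> ^ e)"
proof (cases "\<bar>u\<bar> \<le> 1")
  case False
  then have "\<bar>u\<bar> ^ 1 \<le> \<bar>u\<bar> ^ e"
    using assms by (intro power_increasing) auto
  then show ?thesis by simp
qed simp

lemma abs_le_power_sum_map:
  fixes x :: "nat \<Rightarrow> real"
  assumes "j < length a" "0 < a!j"
    and nonneg: "\<And>i. i < n \<Longrightarrow> 0 \<le> x i ^ (a!j)" and "i < n"
  shows "\<bar>x i\<bar> \<le> max 1 (power_sum_map n a x j)"
proof -
  have "\<bar>x i\<bar> ^ (a!j) = x i ^ (a!j)"
    using nonneg[OF \<open>i < n\<close>] by (metis abs_of_nonneg power_abs)
  also have "\<dots> \<le> (\<Sum>i'<n. x i' ^ (a!j))"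
    using nonneg \<open>i < n\<close> by (intro member_le_sum) auto
  also have "\<dots> = power_sum_map n a x j"
    using \<open>j < length a\<close> by (simp add: power_sum_map_def)
  finally show ?thesis
    using abs_le_max_one_power[OF \<open>0 < a!j\<close>, of "x i"] by linarith
qed

lemma closed_power_sum_map_image:
  fixes P :: "real set"
  assumes "closed P" and j: "j < length a" "0 < a!j"
    and nonneg: "\<And>u. u \<in> P \<Longrightarrow> 0 \<le> u ^ (a!j)"
  shows "closed (power_sum_map n a ` {x. \<forall>i<n. x i \<in> P})"
proof -
  let ?f = "power_sum_map n a" and ?S = "power_sum_map n a ` {x. \<forall>i<n. x i \<in> P}"
  define box where "box C = Pi UNIV (\<lambda>i. if i < n then cball 0 C \<inter> P else {0})" for C
  have box_image_subset: "?f ` box C \<subseteq> ?S" for C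
    by (auto simp: box_def Pi_iff intro!: imageI) (metis IntE)
  have closed_box_image: "closed (?f ` box C)" for C
  proof -
    have "compact (box C)"
      unfolding box_def using \<open>closed P\<close> by (intro compact_Pi_UNIV) (simp add: compact_Int_closed)
    then show ?thesis
      by (intro compact_imp_closed compact_continuous_image continuous_on_power_sum_map)
  qed
  have bounded_in_box_image: "y \<in> ?f ` box (max 1 B)" if "y \<in> ?S" "y j \<le> B" for y B
  proof -
    from \<open>y \<in> ?S\<close> obtain x where x: "\<forall>i<n. x i \<in> P" "y = ?f x" by blast
    have bound: "\<bar>x i\<bar> \<le> max 1 B" if "i < n" for i
    proof -
      have "\<bar>x i\<bar> \<le> max 1 (?f x j)"
        using x(1) nonneg \<open>i < n\<close> by (intro abs_le_power_sum_map[OF j]) auto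
      then show ?thesis
        using \<open>y j \<le> B\<close> unfolding x(2) by linarith
    qed
    have "(if i < n then x i else 0) \<in> (if i < n then cball 0 (max 1 B) \<inter> P else {0})" for i
      using bound x(1) by simp
    then have "(\<lambda>i. if i < n then x i else 0) \<in> box (max 1 B)"
      unfolding box_def by blast
    then have "?f (\<lambda>i. if i < n then x i else 0) \<in> ?f ` box (max 1 B)"
      by (rule imageI)
    then show ?thesis
      by (simp only: x(2) power_sum_map_restrict)
  qed
  have "l \<in> ?S" if y: "\<And>k. y k \<in> ?S" and lim: "y \<longlonglongrightarrow> l" for y l
  proof -
    have "(\<lambda>k. y k j) \<longlonglongrightarrow> l j"
      using continuous_on_tendsto_compose[OF continuous_on_product_coordinates lim] by simp
    then obtain B where B: "\<And>k. norm (y k j) \<le> B"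
      by (metis BseqE convergentI convergent_imp_Bseq)
    have "y k j \<le> B" for k
      using B[of k] by (simp add: abs_le_iff)
    then have "\<And>k. y k \<in> ?f ` box (max 1 B)"
      by (rule bounded_in_box_image[OF y])
    then have "l \<in> ?f ` box (max 1 B)"
      by (rule closed_sequentially[OF closed_box_image _ lim])
    then show ?thesis
      using box_image_subset by blast
  qed
  then show ?thesis
    unfolding closed_sequential_limits by blast
qed

lemma not_closed_power_sum_map_1_3:
  "\<not> closed (power_sum_map 2 [1,3] ` (UNIV :: (nat \<Rightarrow> 'a::{real_normed_field,perfect_space}) set))"
proof
  let ?S = "power_sum_map 2 [1,3] ` (UNIV :: (nat \<Rightarrow> 'a) set)"
  assume "closed ?S"
  define F where "F v = (\<lambda>j::nat. if j = 0 then v^2/3 else if j = 1 then v^6/27 - v^3/3 + 1 else 0)"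
    for v :: 'a
  have F_in_image: "F v \<in> ?S" if "v \<noteq> 0" for v
  proof
    show "F v = power_sum_map 2 [1,3] (\<lambda>i. if i = 0 then 1/v else v^2/3 - 1/v)"
    proof
      fix j :: nat
      consider "j = 0" | "j = 1" | "j \<ge> 2" by linarith
      then show "F v j = power_sum_map 2 [1,3] (\<lambda>i. if i = 0 then 1/v else v^2/3 - 1/v) j"
        using \<open>v \<noteq> 0\<close>
        by cases (auto simp: F_def power_sum_map_def numeral_2_eq_2 field_simps,
            simp add: eval_nat_numeral algebra_simps)
    qed
  qed simp
  have "continuous_on UNIV F"
    unfolding F_def
  proof (intro continuous_on_coordinatewise_then_product)
    fix j
    show "continuous_on UNIV (\<lambda>v::'a. if j = 0 then v^2/3 else if j = 1 then v^6/27 - v^3/3 + 1 else 0)"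
      by (cases "j = 0"; cases "j = 1") (auto intro!: continuous_intros)
  qed
  then have "(F \<longlongrightarrow> F 0) (at 0)"
    by (simp add: continuous_on_def)
  moreover have "eventually (\<lambda>v. F v \<in> ?S) (at 0)"
    using F_in_image eventually_at_topological by blast
  ultimately have "F 0 \<in> ?S"
    using Lim_in_closed_set[OF \<open>closed ?S\<close>] by (metis at_neq_bot)
  then obtain x where x: "F 0 = power_sum_map 2 [1,3] x" by blast
  have "x 0 + x 1 = 0" "x 0 ^ 3 + x 1 ^ 3 = 1"
    using fun_cong[OF x, of 0] fun_cong[OF x, of 1]
    by (simp_all add: F_def power_sum_map_def numeral_2_eq_2)
  then show False
    by (simp add: add_eq_0_iff2)
qed

lemma valid_exponents_1_3: "valid_exponents [1,3]"
  by (simp add: valid_exponents_def)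

lemma closed_im_real_if_even_exponent:
  assumes "valid_exponents a" "k \<in> set a" "even k"
  shows "closed (im_real n a)"
proof -
  obtain j where j: "j < length a" "a!j = k"
    using \<open>k \<in> set a\<close> by (metis in_set_conv_nth)
  have "0 < a!j"
    using assms j by (simp add: valid_exponents_def)
  then have "closed (power_sum_map n a ` {x. \<forall>i<n. x i \<in> (UNIV :: real set)})"
    using j \<open>even k\<close> by (intro closed_power_sum_map_image) (auto simp: zero_le_even_power)
  then show ?thesis
    by (simp add: im_real_def)
qed

lemma closedin_im_nonneg:
  assumes "valid_exponents a"
  shows "closedin (top_of_set (nonneg_orthant (length a))) (im_nonneg n a)"
proof -
  have "im_nonneg n a \<subseteq> nonneg_orthant (length a)"
    by (auto simp: im_nonneg_def nonneg_orthant_def power_sum_map_def intro!: sum_nonneg)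
  moreover have "closed (im_nonneg n a)"
  proof (cases "a = []")
    case True
    then have "im_nonneg n a = {\<lambda>_. 0}"
      by (auto simp: im_nonneg_def power_sum_map_Nil intro!: image_eqI[of _ _ "\<lambda>_. 0"])
    then show ?thesis by simp
  next
    case False
    then have "0 < a!0"
      using assms by (simp add: valid_exponents_def)
    then have "closed (power_sum_map n a ` {x. \<forall>i<n. x i \<in> {0::real..}})"
      using False by (intro closed_power_sum_map_image) auto
    then show ?thesis
      by (simp add: im_nonneg_def)
  qed
  ultimately show ?thesis
    using closed_subset by blast
qed

theorem proposition4p1:
  shows "(\<exists>n a. 1 \<le> n \<and> valid_exponents a \<and> \<not> closed (im_complex n a))
    \<and> (\<forall>n a. valid_exponents a \<and> (\<exists>k\<in>set a. even k) \<longrightarrow> closed (im_real n a))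
    \<and> (\<exists>n a. 1 \<le> n \<and> valid_exponents a \<and> (\<forall>k\<in>set a. odd k) \<and> \<not> closed (im_real n a))
    \<and> (\<forall>n a. valid_exponents a \<longrightarrow>
          closedin (top_of_set (nonneg_orthant (length a))) (im_nonneg n a))"
proof (intro conjI allI impI)
  show "\<exists>n a. 1 \<le> n \<and> valid_exponents a \<and> \<not> closed (im_complex n a)"
    using not_closed_power_sum_map_1_3[where 'a=complex] valid_exponents_1_3
    unfolding im_complex_def by (intro exI[of _ 2] exI[of _ "[1,3]"]) auto
  show "\<exists>n a. 1 \<le> n \<and> valid_exponents a \<and> (\<forall>k\<in>set a. odd k) \<and> \<not> closed (im_real n a)"
    using not_closed_power_sum_map_1_3[where 'a=real] valid_exponents_1_3
    unfolding im_real_def by (intro exI[of _ 2] exI[of _ "[1,3]"]) auto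
  show "closed (im_real n a)" if "valid_exponents a \<and> (\<exists>k\<in>set a. even k)" for n a
    using that closed_im_real_if_even_exponent by blast
  show "closedin (top_of_set (nonneg_orthant (length a))) (im_nonneg n a)"
    if "valid_exponents a" for n a
    using that by (rule closedin_im_nonneg)
qed

end
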